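(* Let the random permutation $\sigma$ be uniformly distributed on the symmetric group $S_N$, and let $l\ge 1$ be an integer. Then $$\mathrm{Ex}\big[C_\sigma^{\underline{l}}\big] = (-1)^l\, Z_l\big(-\zeta_N(1), -\zeta_N(2), \ldots, -\zeta_N(l)\big),$$ where $$Z_l(g_1,\ldots,g_l) = \sum_{\substack{n_1\ge0,\ldots,n_l\ge 0\\ n_1+2n_2+\cdots+ln_l=l}} \frac{l!\, g_1^{n_1}g_2^{n_2}\cdots g_l^{n_l}}{n_1!\,1^{n_1}\, n_2!\,2^{n_2}\cdots n_l!\,l^{n_l}}$$ and $\zeta_N(m)=\sum_{1\le n\le N} n^{-m}$.
   Context: For a permutation $\pi$ of $\{1,\ldots,N\}$, $C_\pi$ denotes the number of cycles of $\pi$; $\mathrm{Ex}$ denotes expectation. For a real number $x$, $x^{\underline{l}}=x(x-1)\cdots(x-l+1)$ denotes the $l$-th falling power. *)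

theory Defs
  imports "HOL-Probability.Probability" "HOL-Combinatorics.Orbits"
begin

definition falling_pow :: "real \<Rightarrow> nat \<Rightarrow> real" where
  "falling_pow x l = (\<Prod>i<l. (x - real i))"

text \<open>Number of cycles of a permutation of {1..N} (fixed points count as cycles):
  the number of distinct orbits.\<close>
definition num_cycles :: "nat \<Rightarrow> (nat \<Rightarrow> nat) \<Rightarrow> nat" where
  "num_cycles N \<pi> = card (orbit \<pi> ` {1..N})"

definition zetaN :: "nat \<Rightarrow> nat \<Rightarrow> real" where
  "zetaN N m = (\<Sum>n=1..N. 1 / real n ^ m)"

text \<open>Cycle index polynomial Z_l(g_1,...,g_l); tuples (n_1,...,n_l) are functions on {1..l}
  (each n_i \<le> l is automatic from the constraint).\<close>
definition Zpoly :: "nat \<Rightarrow> (nat \<Rightarrow> real) \<Rightarrow> real" where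
  "Zpoly l g = (\<Sum>n \<in> {n \<in> {1..l} \<rightarrow>\<^sub>E {..l}. (\<Sum>i=1..l. i * n i) = l}.
      fact l * (\<Prod>i=1..l. g i ^ n i) / (\<Prod>i=1..l. fact (n i) * real i ^ n i))"

end

theory Submission
  imports Defs "HOL-Computational_Algebra.Formal_Power_Series"
begin

text \<open>
  Inserting the point \<open>N + 1\<close> into a permutation of \<open>{1..N}\<close>, either as a new fixed point or
  right after one of the \<open>N\<close> old points, shows that the sum of \<open>t ^ C\<^sub>\<sigma>\<close> over all
  \<open>\<sigma>\<close> is \<open>t (t + 1) \<cdots> (t + N - 1)\<close>. For \<open>t = 1 + X\<close> the coefficient of \<open>X ^ l\<close> is the sum of
  \<open>C\<^sub>\<sigma> gchoose l\<close>, so the exponential generating function of the falling moments of \<open>C\<^sub>\<sigma>\<close> is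
  \<open>\<Prod>n=1..N. 1 + X / n\<close>, whose logarithmic derivative is \<open>\<Sum>i. (-1) ^ i \<zeta>\<^sub>N(i + 1) X ^ i\<close>.
  On the other side, removing one cycle from a cycle type gives the recurrence
  \<open>(l + 1) Z\<^sub>l\<^sub>+\<^sub>1 / (l + 1)! = \<Sum>i\<le>l. g\<^sub>i\<^sub>+\<^sub>1 Z\<^sub>l\<^sub>-\<^sub>i / (l - i)!\<close>, i.e. the exponential generating
  function of \<open>Z\<^sub>l(g)\<close> is \<open>exp (\<Sum>m. g\<^sub>m X ^ m / m)\<close>. So the generating function of
  \<open>(-1) ^ l Z\<^sub>l(-\<zeta>\<^sub>N)\<close> solves the same linear differential equation with the same constant term,
  and the two series coincide.
\<close>

unbundle no vec_syntax
notation fps_nth (infixl \<open>$\<close> 75)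

section \<open>Counting cycles by inserting a point\<close>

lemma card_image_eq_if_same_fibres:
  assumes "\<And>x y. x \<in> A \<Longrightarrow> y \<in> A \<Longrightarrow> f x = f y \<longleftrightarrow> g x = g y"
  shows "card (f ` A) = card (g ` A)"
proof -
  define h where "h = (\<lambda>X. g (inv_into A f X))"
  have h_f: "h (f x) = g x" if "x \<in> A" for x
    using assms that inv_into_into[of "f x" f A] f_inv_into_f[of "f x" f A]
    unfolding h_def by auto
  have "bij_betw h (f ` A) (g ` A)"
    by (auto simp: bij_betw_def inj_on_def image_image h_f assms)
  then show ?thesis by (rule bij_betw_same_card)
qed

lemma permutation_orbit_eq_iff:
  assumes "permutation f"
  shows "orbit f x = orbit f y \<longleftrightarrow> y \<in> orbit f x"
  by (metis assms cyclic_on_orbit' orbit_cyclic_eq3 permutation_self_in_orbit)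

context
  fixes S a b \<tau>
  assumes a_notin: "a \<notin> S" and b_in: "b \<in> S" and \<tau>_permutes: "\<tau> permutes S"
begin

private abbreviation "\<sigma> \<equiv> Transposition.transpose a b \<circ> \<tau>"

private lemma \<sigma>_a: "\<sigma> a = b"
  using \<tau>_permutes a_notin by (simp add: permutes_not_in)

private lemma \<sigma>_in: "z \<in> S \<Longrightarrow> \<sigma> z = (if \<tau> z = b then a else \<tau> z)"
  using \<tau>_permutes a_notin by (auto simp: Transposition.transpose_def permutes_in_image)

lemma in_orbit_transpose_comp:
  assumes "x \<in> S" "y \<in> orbit \<tau> x"
  shows "y \<in> orbit \<sigma> x"
  using assms(2)
proof induction
  case base
  then show ?case
    using \<sigma>_in[OF \<open>x \<in> S\<close>] \<sigma>_a by (metis orbit.base orbit.step)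
next
  case (step y)
  have "y \<in> S" using step.hyps permutes_orbit_subset[OF \<tau>_permutes \<open>x \<in> S\<close>] by auto
  then show ?case
    using \<sigma>_in step.IH \<sigma>_a by (metis orbit.step)
qed

lemma in_orbit_transpose_compD:
  assumes "x \<in> S" "y \<in> orbit \<sigma> x"
  shows "y \<in> orbit \<tau> x \<or> (y = a \<and> b \<in> orbit \<tau> x)"
  using assms(2)
proof induction
  case base
  then show ?case using \<sigma>_in[OF \<open>x \<in> S\<close>] by (auto intro: orbit.base)
next
  case (step y)
  from step.IH show ?case
  proof
    assume y: "y \<in> orbit \<tau> x"
    then have "y \<in> S" using permutes_orbit_subset[OF \<tau>_permutes \<open>x \<in> S\<close>] by auto
    then show ?thesis using \<sigma>_in y by (auto intro: orbit.step)
  qed (use \<sigma>_a in auto)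
qed

lemma card_orbits_transpose_comp:
  assumes "finite S"
  shows "card (orbit \<sigma> ` insert a S) = card (orbit \<tau> ` S)"
proof -
  have perm_\<tau>: "permutation \<tau>" using \<tau>_permutes assms by (rule permutes_imp_permutation[rotated])
  have perm_\<sigma>: "permutation \<sigma>" using perm_\<tau> by (simp add: permutation_compose permutation_swap_id)
  have "orbit \<sigma> a = orbit \<sigma> b"
    using permutation_orbit_eq_iff[OF perm_\<sigma>] \<sigma>_a by (metis orbit.base)
  then have "orbit \<sigma> ` insert a S = orbit \<sigma> ` S" using b_in by auto
  also have "card \<dots> = card (orbit \<tau> ` S)"
  proof (rule card_image_eq_if_same_fibres)
    fix x y assume "x \<in> S" "y \<in> S"
    then show "orbit \<sigma> x = orbit \<sigma> y \<longleftrightarrow> orbit \<tau> x = orbit \<tau> y"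
      unfolding permutation_orbit_eq_iff[OF perm_\<sigma>] permutation_orbit_eq_iff[OF perm_\<tau>]
      using in_orbit_transpose_comp in_orbit_transpose_compD a_notin by blast
  qed
  finally show ?thesis .
qed

end

lemma card_orbits_insert_fixpoint:
  assumes "finite S" "a \<notin> S" "\<tau> permutes S"
  shows "card (orbit \<tau> ` insert a S) = Suc (card (orbit \<tau> ` S))"
proof -
  have "orbit \<tau> a = {a}"
    using assms by (simp add: orbit_eq_singleton_iff permutes_not_in)
  then have "orbit \<tau> a \<notin> orbit \<tau> ` S"
    using permutes_orbit_subset[OF assms(3)] assms(2) by blast
  then show ?thesis using assms(1) by simp
qed

lemma sum_permutations_num_cycles_Suc:
  fixes f :: "nat \<Rightarrow> 'a :: semiring_1"
  shows "(\<Sum>\<sigma> | \<sigma> permutes {1..Suc N}. f (num_cycles (Suc N) \<sigma>))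
       = (\<Sum>\<tau> | \<tau> permutes {1..N}. f (Suc (num_cycles N \<tau>)) + of_nat N * f (num_cycles N \<tau>))"
proof -
  let ?S = "{1..N}" and ?P = "{\<tau>. \<tau> permutes {1..N}}"
  have insert_S: "{1..Suc N} = insert (Suc N) ?S" by auto
  have "(\<Sum>\<sigma> | \<sigma> permutes {1..Suc N}. f (num_cycles (Suc N) \<sigma>))
      = (\<Sum>b\<in>insert (Suc N) ?S. \<Sum>\<tau>\<in>?P.
           f (card (orbit (Transposition.transpose (Suc N) b \<circ> \<tau>) ` insert (Suc N) ?S)))"
    unfolding insert_S num_cycles_def by (rule sum_over_permutations_insert) auto
  also have "\<dots> = (\<Sum>\<tau>\<in>?P. f (Suc (num_cycles N \<tau>))) + (\<Sum>b\<in>?S. \<Sum>\<tau>\<in>?P. f (num_cycles N \<tau>))"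
  proof -
    have "Suc N \<notin> ?S" by simp
    moreover have "card (orbit \<tau> ` insert (Suc N) ?S) = Suc (num_cycles N \<tau>)" if "\<tau> \<in> ?P" for \<tau>
      unfolding num_cycles_def using that by (intro card_orbits_insert_fixpoint) auto
    moreover have "card (orbit (Transposition.transpose (Suc N) b \<circ> \<tau>) ` insert (Suc N) ?S) = num_cycles N \<tau>"
      if "b \<in> ?S" "\<tau> \<in> ?P" for b \<tau>
      unfolding num_cycles_def using that by (intro card_orbits_transpose_comp) auto
    ultimately show ?thesis by simp
  qed
  also have "\<dots> = (\<Sum>\<tau>\<in>?P. f (Suc (num_cycles N \<tau>)) + of_nat N * f (num_cycles N \<tau>))"
    by (simp add: sum.distrib sum_distrib_left)
  finally show ?thesis .
qed

lemma sum_permutations_power_num_cycles: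
  fixes t :: "'a :: comm_semiring_1"
  shows "(\<Sum>\<sigma> | \<sigma> permutes {1..N}. t ^ num_cycles N \<sigma>) = (\<Prod>n<N. t + of_nat n)"
proof (induction N)
  case 0
  then show ?case by (simp add: num_cycles_def)
next
  case (Suc N)
  have "(\<Sum>\<sigma> | \<sigma> permutes {1..Suc N}. t ^ num_cycles (Suc N) \<sigma>)
      = (t + of_nat N) * (\<Sum>\<tau> | \<tau> permutes {1..N}. t ^ num_cycles N \<tau>)"
    unfolding sum_permutations_num_cycles_Suc by (simp add: sum_distrib_left algebra_simps)
  also have "\<dots> = (\<Prod>n<Suc N. t + of_nat n)"
    by (simp only: Suc.IH prod.lessThan_Suc mult.commute)
  finally show ?case .
qed

lemma falling_pow_eq_fact_gchoose: "falling_pow x l = fact l * (x gchoose l)"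
  by (simp add: falling_pow_def gbinomial_prod_rev atLeast0LessThan)

lemma sum_permutations_falling_pow_num_cycles:
  "(\<Sum>\<sigma> | \<sigma> permutes {1..N}. falling_pow (real (num_cycles N \<sigma>)) l)
     = fact l * (\<Prod>n<N. 1 + fps_X + of_nat n :: real fps) $ l"
proof -
  have "(1 + fps_X :: real fps) ^ c $ l = real c gchoose l" for c
    by (metis fps_binomial_of_nat fps_binomial_nth)
  then show ?thesis
    by (simp add: sum_permutations_power_num_cycles[symmetric] fps_sum_nth
        falling_pow_eq_fact_gchoose sum_distrib_left)
qed

section \<open>Cycle index polynomials\<close>

text \<open>A cycle type of size \<open>l\<close> with cycle lengths at most \<open>M\<close>: \<open>n i\<close> is the number of \<open>i\<close>-cycles.\<close>
definition cycle_types :: "nat \<Rightarrow> nat \<Rightarrow> (nat \<Rightarrow> nat) set" where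
  "cycle_types M l = {n. (\<forall>i. n i \<noteq> 0 \<longrightarrow> i \<in> {1..M}) \<and> (\<Sum>i=1..M. i * n i) = l}"

definition cycle_type_weight :: "(nat \<Rightarrow> real) \<Rightarrow> nat \<Rightarrow> (nat \<Rightarrow> nat) \<Rightarrow> real" where
  "cycle_type_weight g M n = (\<Prod>i=1..M. g i ^ n i / (fact (n i) * real i ^ n i))"

definition cycle_index :: "(nat \<Rightarrow> real) \<Rightarrow> nat \<Rightarrow> nat \<Rightarrow> real" where
  "cycle_index g M l = (\<Sum>n\<in>cycle_types M l. cycle_type_weight g M n)"

lemma cycle_types_support: "n \<in> cycle_types M l \<Longrightarrow> n i \<noteq> 0 \<Longrightarrow> i \<in> {1..M}"
  unfolding cycle_types_def by blast

lemma cycle_types_le: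
  assumes "n \<in> cycle_types M l"
  shows "i * n i \<le> l"
proof (cases "n i = 0")
  case False
  with assms have "i \<in> {1..M}" by (rule cycle_types_support)
  then have "i * n i \<le> (\<Sum>j=1..M. j * n j)" by (intro member_le_sum) auto
  with assms show ?thesis by (simp add: cycle_types_def)
qed simp

lemma cycle_types_nonzero_le:
  assumes "n \<in> cycle_types M l" "n i \<noteq> 0"
  shows "n i \<le> l" "i \<le> l"
proof -
  have "i \<noteq> 0" using cycle_types_support[OF assms] by simp
  then have "n i \<le> i * n i" "i \<le> i * n i" using assms(2) by simp_all
  moreover have "i * n i \<le> l" using assms(1) by (rule cycle_types_le)
  ultimately show "n i \<le> l" "i \<le> l" by linarith+
qed

lemma finite_cycle_types: "finite (cycle_types M l)"
proof (rule finite_subset)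
  show "cycle_types M l \<subseteq> {n. \<forall>i. (i \<in> {1..M} \<longrightarrow> n i \<in> {..l}) \<and> (i \<notin> {1..M} \<longrightarrow> n i = 0)}"
  proof (intro subsetI CollectI allI conjI impI)
    fix n i assume n: "n \<in> cycle_types M l"
    show "n i \<in> {..l}" using cycle_types_nonzero_le(1)[OF n, of i] by (cases "n i = 0") auto
    show "i \<notin> {1..M} \<Longrightarrow> n i = 0" using cycle_types_support[OF n] by blast
  qed
qed (rule finite_set_of_finite_funs; simp)

lemma cycle_types_mono:
  assumes "l \<le> M"
  shows "cycle_types M l = cycle_types l l"
proof -
  have sum_eq: "(\<Sum>i=1..M. i * n i) = (\<Sum>i=1..l. i * n i)" if "\<forall>i. n i \<noteq> 0 \<longrightarrow> i \<in> {1..l}" for n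
    using that assms by (intro sum.mono_neutral_right) auto
  show ?thesis
  proof (intro set_eqI iffI)
    fix n assume n: "n \<in> cycle_types M l"
    then have supp: "\<forall>i. n i \<noteq> 0 \<longrightarrow> i \<in> {1..l}"
      using cycle_types_support cycle_types_nonzero_le(2) by fastforce
    then have "(\<Sum>i=1..M. i * n i) = (\<Sum>i=1..l. i * n i)" by (rule sum_eq)
    with n supp show "n \<in> cycle_types l l" unfolding cycle_types_def by simp
  next
    fix n assume n: "n \<in> cycle_types l l"
    then have supp: "\<forall>i. n i \<noteq> 0 \<longrightarrow> i \<in> {1..l}" by (simp add: cycle_types_def)
    then have "\<forall>i. n i \<noteq> 0 \<longrightarrow> i \<in> {1..M}" using assms by (metis atLeastAtMost_iff le_trans)
    moreover have "(\<Sum>i=1..M. i * n i) = (\<Sum>i=1..l. i * n i)" using supp by (rule sum_eq)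
    ultimately show "n \<in> cycle_types M l" using n unfolding cycle_types_def by simp
  qed
qed

lemma cycle_type_weight_mono:
  assumes "\<forall>i. n i \<noteq> 0 \<longrightarrow> i \<in> {1..L}" "L \<le> M"
  shows "cycle_type_weight g M n = cycle_type_weight g L n"
proof -
  have "n i = 0" if "i \<notin> {1..L}" for i using assms(1) that by blast
  then show ?thesis
    unfolding cycle_type_weight_def using assms(2) by (intro prod.mono_neutral_right) auto
qed

lemma cycle_index_mono:
  assumes "l \<le> M"
  shows "cycle_index g M l = cycle_index g l l"
  unfolding cycle_index_def cycle_types_mono[OF assms]
  using assms by (intro sum.cong refl cycle_type_weight_mono) (auto simp: cycle_types_def)

lemma Zpoly_eq_cycle_index: "Zpoly l g = fact l * cycle_index g l l"
proof -
  let ?A = "{n \<in> {1..l} \<rightarrow>\<^sub>E {..l}. (\<Sum>i=1..l. i * n i) = l}"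
  have "Zpoly l g = fact l * (\<Sum>n\<in>?A. cycle_type_weight g l n)"
    unfolding Zpoly_def cycle_type_weight_def by (simp add: sum_distrib_left prod_dividef)
  also have "(\<Sum>n\<in>?A. cycle_type_weight g l n) = cycle_index g l l"
    unfolding cycle_index_def
  proof (rule sum.reindex_bij_witness[of _ "\<lambda>n. restrict n {1..l}" "\<lambda>n i. if i \<in> {1..l} then n i else 0"])
    fix n assume n: "n \<in> cycle_types l l"
    have "n i \<le> l" for i using cycle_types_nonzero_le(1)[OF n, of i] by (cases "n i = 0") auto
    then show "restrict n {1..l} \<in> ?A"
      using n by (auto simp: cycle_types_def)
    show "(\<lambda>i. if i \<in> {1..l} then restrict n {1..l} i else 0) = n"
      using cycle_types_support[OF n] by fastforce
  qed (auto simp: cycle_types_def cycle_type_weight_def PiE_def extensional_def fun_eq_iff)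
  finally show ?thesis .
qed

lemma cycle_types_update:
  assumes "m \<in> cycle_types M k" "i \<in> {1..M}" "k + i * c = l + i * m i"
  shows "m(i := c) \<in> cycle_types M l"
proof -
  have "(\<Sum>j=1..M. j * (m(i := c)) j) + i * m i = (\<Sum>j=1..M. j * m j) + i * c"
    using assms(2) by (simp add: sum.remove)
  then show ?thesis
    using assms unfolding cycle_types_def by auto
qed

lemma cycle_type_weight_add_cycle:
  assumes "i \<in> {1..M}"
  shows "real i * real (Suc (m i)) * cycle_type_weight g M (m(i := Suc (m i)))
           = g i * cycle_type_weight g M m"
proof -
  let ?t = "\<lambda>j k. g j ^ k / (fact k * real j ^ k)"
  have "real i \<noteq> 0" using assms by simp
  then have "real i * real (Suc k) * ?t i (Suc k) = g i * ?t i k" for k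
    by (simp add: fact_Suc del: of_nat_Suc)
  then show ?thesis
    using assms unfolding cycle_type_weight_def by (simp add: prod.remove mult.assoc)
qed

lemma sum_cycle_types_count:
  assumes "i \<in> {1..M}"
  shows "(\<Sum>n\<in>cycle_types M l. real i * real (n i) * cycle_type_weight g M n)
           = (if i \<le> l then g i * cycle_index g M (l - i) else 0)"
proof -
  let ?S = "{n \<in> cycle_types M l. n i \<noteq> 0}"
  have "(\<Sum>n\<in>cycle_types M l. real i * real (n i) * cycle_type_weight g M n)
      = (\<Sum>n\<in>?S. real i * real (n i) * cycle_type_weight g M n)"
    by (intro sum.mono_neutral_right finite_cycle_types) auto
  also have "\<dots> = (if i \<le> l then g i * cycle_index g M (l - i) else 0)"
  proof (cases "i \<le> l")
    case False
    then have "?S = {}" using cycle_types_nonzero_le(2) by fastforce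
    then show ?thesis using False by (simp only: sum.empty if_False)
  next
    case True
    have "(\<Sum>n\<in>?S. real i * real (n i) * cycle_type_weight g M n)
        = (\<Sum>m\<in>cycle_types M (l - i). g i * cycle_type_weight g M m)"
    proof (rule sum.reindex_bij_witness[of _ "\<lambda>m. m(i := Suc (m i))" "\<lambda>n. n(i := n i - 1)"])
      fix n assume n: "n \<in> ?S"
      then show "n(i := n i - 1) \<in> cycle_types M (l - i)"
        using True assms by (intro cycle_types_update[of n M l]) (auto simp: algebra_simps)
      show "g i * cycle_type_weight g M (n(i := n i - 1)) = real i * real (n i) * cycle_type_weight g M n"
        using cycle_type_weight_add_cycle[OF assms, of "n(i := n i - 1)" g] n by simp
    next
      fix m assume m: "m \<in> cycle_types M (l - i)"
      then show "m(i := Suc (m i)) \<in> ?S"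
        using True assms by (auto intro: cycle_types_update[of m M "l - i"])
    qed auto
    also have "\<dots> = g i * cycle_index g M (l - i)"
      by (simp add: cycle_index_def sum_distrib_left)
    finally show ?thesis using True by simp
  qed
  finally show ?thesis .
qed

lemma cycle_index_Suc:
  assumes "Suc k \<le> M"
  shows "real (Suc k) * cycle_index g M (Suc k) = (\<Sum>i\<le>k. g (Suc i) * cycle_index g M (k - i))"
proof -
  have "real (Suc k) * cycle_index g M (Suc k)
      = (\<Sum>n\<in>cycle_types M (Suc k). (\<Sum>i=1..M. real i * real (n i)) * cycle_type_weight g M n)"
    unfolding cycle_index_def sum_distrib_left
  proof (intro sum.cong refl)
    fix n assume "n \<in> cycle_types M (Suc k)"
    then have "real (Suc k) = real (\<Sum>i=1..M. i * n i)" by (simp add: cycle_types_def)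
    then show "real (Suc k) * cycle_type_weight g M n
        = (\<Sum>i=1..M. real i * real (n i)) * cycle_type_weight g M n" by simp
  qed
  also have "\<dots> = (\<Sum>i=1..M. \<Sum>n\<in>cycle_types M (Suc k). real i * real (n i) * cycle_type_weight g M n)"
    by (simp add: sum_distrib_right sum.swap[of _ "cycle_types M (Suc k)"])
  also have "\<dots> = (\<Sum>i=1..M. if i \<le> Suc k then g i * cycle_index g M (Suc k - i) else 0)"
    by (intro sum.cong refl) (simp add: sum_cycle_types_count)
  also have "\<dots> = (\<Sum>i=1..Suc k. g i * cycle_index g M (Suc k - i))"
    using assms by (intro sum.mono_neutral_cong_right) auto
  also have "\<dots> = (\<Sum>i=0..k. g (Suc i) * cycle_index g M (Suc k - Suc i))"
    using sum.shift_bounds_cl_Suc_ivl[of "\<lambda>i. g i * cycle_index g M (Suc k - i)" 0 k] by simp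
  also have "\<dots> = (\<Sum>i\<le>k. g (Suc i) * cycle_index g M (k - i))"
    by (simp add: atLeast0AtMost)
  finally show ?thesis .
qed

lemma Zpoly_Suc:
  "Zpoly (Suc k) g / fact k = (\<Sum>i\<le>k. g (Suc i) * (Zpoly (k - i) g / fact (k - i)))"
proof -
  have "Zpoly (Suc k) g / fact k = real (Suc k) * cycle_index g (Suc k) (Suc k)"
    by (simp add: Zpoly_eq_cycle_index)
  moreover have "Zpoly (k - i) g / fact (k - i) = cycle_index g (Suc k) (k - i)" for i
    using cycle_index_mono[of "k - i" "Suc k" g] by (simp add: Zpoly_eq_cycle_index)
  ultimately show ?thesis using cycle_index_Suc[of k "Suc k" g] by simp
qed

section \<open>The generating function of the right-hand side\<close>

lemma fps_linear_ode_unique: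
  fixes A B G :: "'a :: field_char_0 fps"
  assumes "fps_deriv A = G * A" "fps_deriv B = G * B" "A $ 0 = B $ 0"
  shows "A = B"
proof (rule fps_ext)
  fix n show "A $ n = B $ n"
  proof (induction n rule: less_induct)
    case (less n)
    show ?case
    proof (cases n)
      case (Suc k)
      have "of_nat (Suc k) * A $ Suc k = (\<Sum>i=0..k. G $ i * A $ (k - i))"
        using arg_cong[OF assms(1), of "\<lambda>F. F $ k"] by (simp add: fps_mult_nth)
      also have "\<dots> = (\<Sum>i=0..k. G $ i * B $ (k - i))"
        using less Suc by (intro sum.cong) auto
      also have "\<dots> = of_nat (Suc k) * B $ Suc k"
        using arg_cong[OF assms(2), of "\<lambda>F. F $ k"] by (simp add: fps_mult_nth)
      finally show ?thesis using Suc by (simp del: of_nat_Suc)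
    qed (use assms in simp)
  qed
qed

lemma fps_alternating_geometric_mult:
  fixes c :: "'a :: field"
  assumes "c \<noteq> 0"
  shows "Abs_fps (\<lambda>i. (- 1) ^ i / c ^ Suc i) * (fps_const c + fps_X) = 1"
proof (rule fps_ext)
  fix n
  show "(Abs_fps (\<lambda>i. (- 1) ^ i / c ^ Suc i) * (fps_const c + fps_X)) $ n = 1 $ n"
    using assms by (cases n) (simp_all add: algebra_simps)
qed

definition Zpoly_zetaN_fps :: "nat \<Rightarrow> real fps" where
  "Zpoly_zetaN_fps N = Abs_fps (\<lambda>l. (- 1) ^ l * Zpoly l (\<lambda>m. - zetaN N m) / fact l)"

definition zetaN_fps :: "nat \<Rightarrow> real fps" where
  "zetaN_fps N = Abs_fps (\<lambda>i. (- 1) ^ i * zetaN N (Suc i))"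

lemma fps_deriv_Zpoly_zetaN_fps:
  "fps_deriv (Zpoly_zetaN_fps N) = zetaN_fps N * Zpoly_zetaN_fps N"
proof (rule fps_ext)
  fix k
  let ?g = "\<lambda>m. - zetaN N m"
  have "fps_deriv (Zpoly_zetaN_fps N) $ k = (- 1) ^ Suc k * (Zpoly (Suc k) ?g / fact k)"
    by (simp add: Zpoly_zetaN_fps_def fact_Suc del: of_nat_Suc)
  also have "\<dots> = (\<Sum>i\<le>k. (- 1) ^ Suc k * (?g (Suc i) * (Zpoly (k - i) ?g / fact (k - i))))"
    by (simp only: Zpoly_Suc sum_distrib_left)
  also have "\<dots> = (\<Sum>i\<le>k. zetaN_fps N $ i * Zpoly_zetaN_fps N $ (k - i))"
  proof (intro sum.cong refl)
    fix i assume "i \<in> {..k}"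
    then obtain j where "k = i + j" using le_iff_add by auto
    then show "(- 1) ^ Suc k * (?g (Suc i) * (Zpoly (k - i) ?g / fact (k - i)))
        = zetaN_fps N $ i * Zpoly_zetaN_fps N $ (k - i)"
      by (simp add: zetaN_fps_def Zpoly_zetaN_fps_def power_add)
  qed
  also have "\<dots> = (zetaN_fps N * Zpoly_zetaN_fps N) $ k"
    by (simp add: fps_mult_nth atLeast0AtMost)
  finally show "fps_deriv (Zpoly_zetaN_fps N) $ k = (zetaN_fps N * Zpoly_zetaN_fps N) $ k" .
qed

lemma Zpoly_zetaN_fps_nth_0: "Zpoly_zetaN_fps N $ 0 = 1"
  by (simp add: Zpoly_zetaN_fps_def Zpoly_def)

lemma Zpoly_zetaN_fps_0: "Zpoly_zetaN_fps 0 = 1"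
proof (rule fps_linear_ode_unique)
  show "fps_deriv (Zpoly_zetaN_fps 0) = 0 * Zpoly_zetaN_fps 0"
    using fps_deriv_Zpoly_zetaN_fps[of 0] by (simp add: zetaN_fps_def zetaN_def fps_zero_def)
qed (simp_all add: Zpoly_zetaN_fps_nth_0)

lemma Zpoly_zetaN_fps_Suc:
  "fps_const (real (Suc N)) * Zpoly_zetaN_fps (Suc N)
     = (fps_const (real (Suc N)) + fps_X) * Zpoly_zetaN_fps N"
proof (rule fps_linear_ode_unique)
  let ?c = "fps_const (real (Suc N))" and ?W = "Zpoly_zetaN_fps N"
  \<comment> \<open>\<open>C = 1 / (N + 1 + X)\<close> is the logarithmic derivative of the new factor \<open>N + 1 + X\<close>.\<close>
  define C where "C = Abs_fps (\<lambda>i. (- 1) ^ i / real (Suc N) ^ Suc i)"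
  have zetaN_fps_Suc: "zetaN_fps (Suc N) = C + zetaN_fps N"
    by (rule fps_ext) (simp add: zetaN_fps_def C_def zetaN_def power_one_over algebra_simps)
  have C_inverse: "C * (?c + fps_X) = 1"
    unfolding C_def by (rule fps_alternating_geometric_mult) simp
  have "fps_deriv ((?c + fps_X) * ?W) = ?W + (?c + fps_X) * (zetaN_fps N * ?W)"
    by (simp add: fps_deriv_Zpoly_zetaN_fps)
  also have "\<dots> = C * (?c + fps_X) * ?W + zetaN_fps N * ((?c + fps_X) * ?W)"
    by (simp only: C_inverse mult_1_left mult.left_commute)
  also have "\<dots> = zetaN_fps (Suc N) * ((?c + fps_X) * ?W)"
    by (simp only: zetaN_fps_Suc distrib_right mult.assoc)
  finally show "fps_deriv ((?c + fps_X) * ?W) = zetaN_fps (Suc N) * ((?c + fps_X) * ?W)" .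
  show "fps_deriv (?c * Zpoly_zetaN_fps (Suc N)) = zetaN_fps (Suc N) * (?c * Zpoly_zetaN_fps (Suc N))"
    by (simp add: fps_deriv_Zpoly_zetaN_fps algebra_simps)
qed (simp add: Zpoly_zetaN_fps_nth_0)

lemma fact_mult_Zpoly_zetaN_fps:
  "fps_const (fact N) * Zpoly_zetaN_fps N = (\<Prod>n<N. 1 + fps_X + of_nat n)"
proof (induction N)
  case 0
  then show ?case by (simp add: Zpoly_zetaN_fps_0)
next
  case (Suc N)
  have "fps_const (fact (Suc N)) * Zpoly_zetaN_fps (Suc N)
      = fps_const (fact N) * (fps_const (real (Suc N)) * Zpoly_zetaN_fps (Suc N))"
    by (simp add: fact_Suc mult.assoc flip: fps_const_mult del: of_nat_Suc)
  also have "\<dots> = fps_const (fact N) * ((of_nat (Suc N) + fps_X) * Zpoly_zetaN_fps N)"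
    using Zpoly_zetaN_fps_Suc[of N] by (simp only: fps_of_nat)
  also have "\<dots> = (1 + fps_X + of_nat N) * (fps_const (fact N) * Zpoly_zetaN_fps N)"
    by (simp add: algebra_simps)
  also have "\<dots> = (\<Prod>n<Suc N. 1 + fps_X + of_nat n)"
    unfolding Suc.IH prod.lessThan_Suc by (rule mult.commute)
  finally show ?case .
qed

theorem theorem3p1:
  fixes N l :: nat
  assumes "l \<ge> 1"
  shows "measure_pmf.expectation (pmf_of_set {\<sigma>. \<sigma> permutes {1..N}})
           (\<lambda>\<sigma>. falling_pow (real (num_cycles N \<sigma>)) l)
         = (-1) ^ l * Zpoly l (\<lambda>m. - zetaN N m)"
  \<comment> \<open>The identity also holds for \<open>l = 0\<close>.\<close>
proof -
  let ?P = "{\<sigma>. \<sigma> permutes {1..N}}"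
  have "finite ?P" "?P \<noteq> {}" "card ?P = fact N"
    by (auto simp: finite_permutations card_permutations intro: permutes_id)
  then have "measure_pmf.expectation (pmf_of_set ?P) (\<lambda>\<sigma>. falling_pow (real (num_cycles N \<sigma>)) l)
      = (\<Sum>\<sigma>\<in>?P. falling_pow (real (num_cycles N \<sigma>)) l) / fact N"
    by (simp add: integral_pmf_of_set)
  also have "\<dots> = fact l * (fps_const (fact N) * Zpoly_zetaN_fps N) $ l / fact N"
    by (simp only: sum_permutations_falling_pow_num_cycles fact_mult_Zpoly_zetaN_fps)
  finally show ?thesis by (simp add: Zpoly_zetaN_fps_def)
qed

end
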